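(* Let $0<T\le1$ and $f\in_d A^M_T$. If there exists a step function $g\in_d E^M_T$ with $g(t)\ge f(t)$ for all $t\in(0,T)$, then $f\in_d I^M_T$.
   Context: Setting: intrinsic location functionals $L$ on a shift-invariant class $H$ of period-$1$ functions (maps $L:H\times\mathcal I\to\mathbb R\cup\{\infty\}$, $\mathcal I$ the compact nondegenerate intervals, that are measurable, satisfy $L(g,I)\in I\cup\{\infty\}$, $L(g,I)=L(\theta_cg,I-c)+c$ with $\theta_cg(x)=g(x+c)$, stability under restriction: $I_2\subseteq I_1$, $L(g,I_1)\in I_2\Rightarrow L(g,I_2)=L(g,I_1)$, and consistency of existence: $I_2\subseteq I_1$, $L(g,I_2)\ne\infty\Rightarrow L(g,I_1)\ne\infty$). $L$ is first-time if it admits a representation by sets $S(g)\subseteq\mathbb R$ with $S(g)=S(\theta_cg)+c$ and shift-compatible partial orders $\preceq$ on $S(g)$ such that $L(g,I)=\infty$ if $S(g)\cap I=\emptyset$ and otherwise is the unique $\preceq$-maximal element of $S(g)\cap I$, and in which $t_1\le t_2$ implies $t_2\preceq t_1$. A periodic stationary process with period $1$ is a stationary process with continuous period-$1$ sample paths in $H$. $I^M_T$ is the set of all laws of $L(\mathbf X,[0,T])$ over all first-time $L$ and all periodic stationary $\mathbf X$ with period $1$. $A^M_T$ is the class of probability distributions on $[0,T]\cup\{\infty\}$ absolutely continuous on $(0,T)$ with càdlàg non-increasing density there. $E^M_T$ is the class of probability distributions $F$ on $[0,T]\cup\{\infty\}$, absolutely continuous on $(0,T)$ with $F(\{T\})=0$,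 whose càdlàg density $f$ on $(0,T)$ is non-increasing, takes non-negative integer values, satisfies $\mathrm{TV}_{(t_1,t_2)}(f)\le f(t_1)+f(t_2)$ for $0<t_1<t_2<T$, and satisfies: if $F([0,T])>0$ and no $t\in(0,T)$ has $F([0,t])=1$ or $F([t,T])=1$, then $f\ge1$ on $(0,T)$ (and, if also $F(\{\infty\})>0$, $f-1$ satisfies the same variation inequality). For a set $A$ of distributions, $f\in_d A$ means some $F\in A$ has density $f$ on $(0,T)$. *)

theory Defs
  imports "HOL-Probability.Probability"
begin

definition shift :: "real \<Rightarrow> (real \<Rightarrow> real) \<Rightarrow> (real \<Rightarrow> real)" where
  "shift c g = (\<lambda>x. g (x + c))"

definition period1 :: "(real \<Rightarrow> real) \<Rightarrow> bool" where
  "period1 g \<longleftrightarrow> (\<forall>x. g (x + 1) = g x)"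

definition shift_inv_class :: "(real \<Rightarrow> real) set \<Rightarrow> bool" where
  "shift_inv_class H \<longleftrightarrow> (\<forall>g\<in>H. period1 g) \<and> (\<forall>g\<in>H. \<forall>c. shift c g \<in> H)"

definition cintervals :: "real set set" where
  "cintervals = {{a..b} | a b. a < b}"

abbreviation path_space :: "(real \<Rightarrow> real) measure" where
  "path_space \<equiv> Pi\<^sub>M UNIV (\<lambda>_. borel)"

definition intrinsic_location :: "(real \<Rightarrow> real) set \<Rightarrow> ((real \<Rightarrow> real) \<Rightarrow> real set \<Rightarrow> ereal) \<Rightarrow> bool" where
  "intrinsic_location H L \<longleftrightarrow>
     shift_inv_class H \<and>
     (\<forall>I\<in>cintervals. (\<lambda>g. L g I) \<in> measurable (restrict_space path_space H) borel) \<and>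
     (\<forall>g\<in>H. \<forall>I\<in>cintervals. L g I \<in> ereal ` I \<union> {\<infinity>}) \<and>
     (\<forall>g\<in>H. \<forall>I\<in>cintervals. \<forall>c. L g I = L (shift c g) ((\<lambda>x. x - c) ` I) + ereal c) \<and>
     (\<forall>g\<in>H. \<forall>I1\<in>cintervals. \<forall>I2\<in>cintervals. I2 \<subseteq> I1 \<longrightarrow> L g I1 \<in> ereal ` I2 \<longrightarrow> L g I2 = L g I1) \<and>
     (\<forall>g\<in>H. \<forall>I1\<in>cintervals. \<forall>I2\<in>cintervals. I2 \<subseteq> I1 \<longrightarrow> L g I2 \<noteq> \<infinity> \<longrightarrow> L g I1 \<noteq> \<infinity>)"

definition maximal_elems :: "(real \<Rightarrow> real \<Rightarrow> bool) \<Rightarrow> real set \<Rightarrow> real set" where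
  "maximal_elems R A = {m \<in> A. \<forall>t\<in>A. R m t \<longrightarrow> t = m}"

text \<open>First-time intrinsic location functionals: representation by sets S(g) and
  shift-compatible partial orders P g (P g s t means s \<preceq> t) on S(g).\<close>
definition first_time :: "(real \<Rightarrow> real) set \<Rightarrow> ((real \<Rightarrow> real) \<Rightarrow> real set \<Rightarrow> ereal) \<Rightarrow> bool" where
  "first_time H L \<longleftrightarrow> intrinsic_location H L \<and>
     (\<exists>(S :: (real \<Rightarrow> real) \<Rightarrow> real set) (P :: (real \<Rightarrow> real) \<Rightarrow> real \<Rightarrow> real \<Rightarrow> bool).
        (\<forall>g\<in>H. \<forall>c. S g = (\<lambda>t. t + c) ` S (shift c g)) \<and>
        (\<forall>g\<in>H. partial_order_on (S g) {(s, t). s \<in> S g \<and> t \<in> S g \<and> P g s t}) \<and>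
        (\<forall>g\<in>H. \<forall>c. \<forall>s\<in>S g. \<forall>t\<in>S g. P g s t \<longleftrightarrow> P (shift c g) (s - c) (t - c)) \<and>
        (\<forall>g\<in>H. \<forall>I\<in>cintervals.
            (S g \<inter> I = {} \<longrightarrow> L g I = \<infinity>) \<and>
            (S g \<inter> I \<noteq> {} \<longrightarrow> (\<exists>m. maximal_elems (P g) (S g \<inter> I) = {m} \<and> L g I = ereal m))) \<and>
        (\<forall>g\<in>H. \<forall>s\<in>S g. \<forall>t\<in>S g. s \<le> t \<longrightarrow> P g t s))"

definition periodic_stationary :: "(real \<Rightarrow> real) set \<Rightarrow> (real \<Rightarrow> real) measure \<Rightarrow> ((real \<Rightarrow> real) \<Rightarrow> (real \<Rightarrow> real)) \<Rightarrow> bool" where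
  "periodic_stationary H M X \<longleftrightarrow>
     prob_space M \<and> X \<in> measurable M path_space \<and>
     (\<forall>\<omega>\<in>space M. X \<omega> \<in> H \<and> continuous_on UNIV (X \<omega>) \<and> period1 (X \<omega>)) \<and>
     (\<forall>c. distr M path_space (\<lambda>\<omega>. shift c (X \<omega>)) = distr M path_space X)"

definition distr_on :: "real \<Rightarrow> ereal measure \<Rightarrow> bool" where
  "distr_on T F \<longleftrightarrow> prob_space F \<and> sets F = sets (borel :: ereal measure) \<and>
     emeasure F (UNIV - ({ereal 0..ereal T} \<union> {\<infinity>})) = 0"

definition density_on :: "ereal measure \<Rightarrow> real \<Rightarrow> (real \<Rightarrow> real) \<Rightarrow> bool" where
  "density_on F T f \<longleftrightarrow> (\<forall>t\<in>{0<..<T}. 0 \<le> f t) \<and> set_borel_measurable lborel {0<..<T} f \<and>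
     (\<forall>A\<in>sets (borel :: real measure). A \<subseteq> {0<..<T} \<longrightarrow>
        emeasure F (ereal ` A) = (\<integral>\<^sup>+ x\<in>A. ennreal (f x) \<partial>lborel))"

definition in_d :: "(real \<Rightarrow> real) \<Rightarrow> real \<Rightarrow> ereal measure set \<Rightarrow> bool" where
  "in_d f T \<A> \<longleftrightarrow> (\<exists>F\<in>\<A>. density_on F T f)"

definition cadlag_on :: "(real \<Rightarrow> real) \<Rightarrow> real \<Rightarrow> real \<Rightarrow> bool" where
  "cadlag_on f a b \<longleftrightarrow> (\<forall>t\<in>{a<..<b}. continuous (at_right t) f \<and> (\<exists>l. (f \<longlongrightarrow> l) (at_left t)))"

definition nonincr_on :: "(real \<Rightarrow> real) \<Rightarrow> real \<Rightarrow> real \<Rightarrow> bool" where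
  "nonincr_on f a b \<longleftrightarrow> (\<forall>x y. a < x \<longrightarrow> x \<le> y \<longrightarrow> y < b \<longrightarrow> f y \<le> f x)"

definition tv_open :: "(real \<Rightarrow> real) \<Rightarrow> real \<Rightarrow> real \<Rightarrow> ereal" where
  "tv_open f a b = (SUP xs \<in> {xs. sorted xs \<and> set xs \<subseteq> {a<..<b}}.
      ereal (\<Sum>i < length xs - 1. \<bar>f (xs ! Suc i) - f (xs ! i)\<bar>))"

definition var_ineq :: "(real \<Rightarrow> real) \<Rightarrow> real \<Rightarrow> bool" where
  "var_ineq f T \<longleftrightarrow> (\<forall>t1 t2. 0 < t1 \<longrightarrow> t1 < t2 \<longrightarrow> t2 < T \<longrightarrow> tv_open f t1 t2 \<le> ereal (f t1 + f t2))"

definition A_M :: "real \<Rightarrow> ereal measure set" where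
  "A_M T = {F. distr_on T F \<and> (\<exists>f. density_on F T f \<and> cadlag_on f 0 T \<and> nonincr_on f 0 T)}"

definition E_M :: "real \<Rightarrow> ereal measure set" where
  "E_M T = {F. distr_on T F \<and> emeasure F {ereal T} = 0 \<and>
     (\<exists>f. density_on F T f \<and> cadlag_on f 0 T \<and> nonincr_on f 0 T \<and>
        (\<forall>t\<in>{0<..<T}. f t \<in> \<int>) \<and> var_ineq f T \<and>
        ((emeasure F {ereal 0..ereal T} > 0 \<and>
          \<not> (\<exists>t\<in>{0<..<T}. emeasure F {ereal 0..ereal t} = 1 \<or> emeasure F {ereal t..ereal T} = 1))
         \<longrightarrow> (\<forall>t\<in>{0<..<T}. f t \<ge> 1) \<and>
             (emeasure F {\<infinity>} > 0 \<longrightarrow> var_ineq (\<lambda>t. f t - 1) T)))}"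

definition I_M :: "real \<Rightarrow> ereal measure set" where
  "I_M T = {distr M (borel :: ereal measure) (\<lambda>\<omega>. L (X \<omega>) {0..T}) | H L M X.
      first_time H L \<and> periodic_stationary H M X}"

definition step_fun_on :: "(real \<Rightarrow> real) \<Rightarrow> real \<Rightarrow> real \<Rightarrow> bool" where
  "step_fun_on g a b \<longleftrightarrow> (\<exists>P. finite P \<and>
     (\<forall>x\<in>{a<..<b}. \<forall>y\<in>{a<..<b}. x \<le> y \<longrightarrow> {x..y} \<inter> P = {} \<longrightarrow> g x = g y))"

end

theory Submission
  imports Defs
begin

text \<open>
  Let \<open>\<lambda>(w) = sup {t. w < f t}\<close> be the upper inverse of the nonincreasing density \<open>f\<close>, so
  that \<open>t < \<lambda>(w)\<close> iff \<open>w < f t\<close>. For \<open>v \<in> [0, 1)\<close> lay out consecutive gaps of lengths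
  \<open>\<lambda>(v), \<lambda>(v + 1), \<lambda>(v + 2), \<dots>\<close> starting at \<open>0\<close>. At most \<open>\<lceil>f t\<rceil> \<le> g t\<close> indices \<open>j\<close>
  satisfy \<open>j + v < f t\<close>, so the total gap length is at most \<open>\<integral> g \<le> 1\<close>. A continuous
  1-periodic sawtooth that is positive exactly on the integer translates of the gaps, observed
  at a uniform phase \<open>u\<close>, is a periodic stationary process; its first zero in \<open>[0, T]\<close> is the
  distance from \<open>u\<close> to the right end of the gap containing \<open>u\<close>. Given \<open>v\<close>, the first zero
  therefore has density \<open>\<Sum>k. [t < \<lambda>(k + v)]\<close>, and averaging over \<open>v\<close> turns this into
  \<open>|{w \<ge> 0. t < \<lambda>(w)}| = f t\<close>. The pointwise bound \<open>f \<le> g\<close> transfers to the right-continuous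
  representatives of the two densities because both are determined by their integrals.
\<close>

section \<open>The first-zero functional\<close>

definition periodic_paths :: "(real \<Rightarrow> real) set" where
  "periodic_paths = {g. continuous_on UNIV g \<and> period1 g}"

definition first_zero :: "(real \<Rightarrow> real) \<Rightarrow> real set \<Rightarrow> ereal" where
  "first_zero g I = (if \<exists>x\<in>I. g x = 0 then ereal (Inf {x\<in>I. g x = 0}) else \<infinity>)"

lemma first_zero_eqI:
  assumes "m \<in> I" "g m = 0" "\<And>y. y \<in> I \<Longrightarrow> g y = 0 \<Longrightarrow> m \<le> y"
  shows "first_zero g I = ereal m"
proof -
  have "Inf {x\<in>I. g x = 0} = m" by (rule cInf_eq_minimum) (use assms in auto)
  then show ?thesis using assms unfolding first_zero_def by auto
qed

lemma first_zero_eq_infinity: "\<not> (\<exists>x\<in>I. g x = 0) \<Longrightarrow> first_zero g I = \<infinity>"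
  unfolding first_zero_def by auto

lemma first_zero_attained:
  fixes g :: "real \<Rightarrow> real"
  assumes "continuous_on UNIV g" "\<exists>x\<in>{a..b}. g x = 0"
  obtains m where "m \<in> {a..b}" "g m = 0" "\<And>y. y \<in> {a..b} \<Longrightarrow> g y = 0 \<Longrightarrow> m \<le> y"
    "first_zero g {a..b} = ereal m"
proof -
  have "compact ({a..b} \<inter> {x. g x = 0})"
    using assms(1) by (intro compact_Int_closed closed_Collect_eq) (auto intro: continuous_intros)
  moreover have "{a..b} \<inter> {x. g x = 0} \<noteq> {}" using assms(2) by auto
  ultimately obtain m where "m \<in> {a..b} \<inter> {x. g x = 0}" "\<forall>y\<in>{a..b} \<inter> {x. g x = 0}. m \<le> y"
    using compact_attains_inf by blast
  then show ?thesis using that first_zero_eqI[of m "{a..b}" g] by auto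
qed

lemma first_zero_le_iff:
  fixes g :: "real \<Rightarrow> real"
  assumes "continuous_on UNIV g"
  shows "first_zero g {a..b} \<le> ereal s \<longleftrightarrow> (\<exists>x\<in>{a..min b s}. g x = 0)"
proof (cases "\<exists>x\<in>{a..b}. g x = 0")
  case True
  then obtain m where m: "m \<in> {a..b}" "g m = 0" "\<And>y. y \<in> {a..b} \<Longrightarrow> g y = 0 \<Longrightarrow> m \<le> y"
    "first_zero g {a..b} = ereal m"
    using first_zero_attained[OF assms] by blast
  show ?thesis
  proof
    assume "first_zero g {a..b} \<le> ereal s"
    then show "\<exists>x\<in>{a..min b s}. g x = 0" using m by (intro bexI[of _ m]) auto
  next
    assume "\<exists>x\<in>{a..min b s}. g x = 0"
    then obtain x where "x \<in> {a..min b s}" "g x = 0" by blast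
    then show "first_zero g {a..b} \<le> ereal s" using m(3)[of x] m(4) by auto
  qed
next
  case False
  then show ?thesis by (auto simp: first_zero_eq_infinity)
qed

text \<open>The point \<open>a\<close> is added to the rationals so that the degenerate interval \<open>a = c\<close> is covered.\<close>
lemma has_zero_iff_rational_approx:
  fixes g :: "real \<Rightarrow> real"
  assumes g: "continuous_on UNIV g" and "a \<le> c"
  shows "(\<exists>x\<in>{a..c}. g x = 0) \<longleftrightarrow> (\<forall>n::nat. \<exists>q\<in>insert a (\<rat> \<inter> {a..c}). \<bar>g q\<bar> < 1 / Suc n)"
proof
  assume "\<exists>x\<in>{a..c}. g x = 0"
  then obtain x where x: "x \<in> {a..c}" "g x = 0" by auto
  show "\<forall>n::nat. \<exists>q\<in>insert a (\<rat> \<inter> {a..c}). \<bar>g q\<bar> < 1 / Suc n"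
  proof
    fix n :: nat
    have "isCont g x" using g by (simp add: continuous_on_eq_continuous_at)
    then obtain d where d: "d > 0" "\<And>y. \<bar>y - x\<bar> < d \<Longrightarrow> \<bar>g y - g x\<bar> < 1 / Suc n"
      unfolding continuous_at_eps_delta dist_real_def by (metis of_nat_0_less_iff zero_less_Suc zero_less_divide_1_iff)
    show "\<exists>q\<in>insert a (\<rat> \<inter> {a..c}). \<bar>g q\<bar> < 1 / Suc n"
    proof (cases "x = a")
      case True then show ?thesis using x by auto
    next
      case False
      then obtain r where "r \<in> \<rat>" "max a (x - d) < r" "r < x"
        using x d Rats_dense_in_real[of "max a (x - d)" x] by auto
      then show ?thesis using d(2)[of r] x by auto
    qed
  qed
next
  assume approx: "\<forall>n::nat. \<exists>q\<in>insert a (\<rat> \<inter> {a..c}). \<bar>g q\<bar> < 1 / Suc n"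
  have "continuous_on {a..c} (\<lambda>x. \<bar>g x\<bar>)"
    using g by (intro continuous_intros) (auto intro: continuous_on_subset)
  then obtain x where x: "x \<in> {a..c}" "\<And>y. y \<in> {a..c} \<Longrightarrow> \<bar>g x\<bar> \<le> \<bar>g y\<bar>"
    using continuous_attains_inf[of "{a..c}" "\<lambda>x. \<bar>g x\<bar>"] \<open>a \<le> c\<close> by auto
  have "\<bar>g x\<bar> \<le> 0"
  proof (rule field_le_epsilon)
    fix e :: real assume "e > 0"
    then obtain n :: nat where n: "1 / Suc n < e" by (metis nat_approx_posE)
    obtain q where q: "q \<in> insert a (\<rat> \<inter> {a..c})" "\<bar>g q\<bar> < 1 / Suc n" using approx by blast
    then have "\<bar>g x\<bar> \<le> \<bar>g q\<bar>" using x(2) \<open>a \<le> c\<close> by auto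
    then show "\<bar>g x\<bar> \<le> 0 + e" using q(2) n by linarith
  qed
  then show "\<exists>x\<in>{a..c}. g x = 0" using x(1) by auto
qed

lemma periodic_paths_continuous: "g \<in> periodic_paths \<Longrightarrow> continuous_on UNIV g"
  by (simp add: periodic_paths_def)

lemma space_restrict_periodic_paths [simp]:
  "space (restrict_space path_space periodic_paths) = periodic_paths"
  by (simp add: space_restrict_space space_PiM)

lemma sets_has_zero_in_interval:
  assumes "a \<le> c"
  shows "{g \<in> periodic_paths. \<exists>x\<in>{a..c}. g x = 0} \<in> sets (restrict_space path_space periodic_paths)"
proof -
  let ?D = "insert a (\<rat> \<inter> {a..c})"
  have "{g::real \<Rightarrow> real. \<bar>g q\<bar> < 1 / Suc n} \<in> sets path_space" for q n
    using measurable_sets[of "\<lambda>g. \<bar>g q\<bar>" path_space borel "{..<1 / Suc n}"]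
    by (simp add: space_PiM vimage_def)
  then have "(\<Inter>n::nat. \<Union>q\<in>?D. {g. \<bar>g q\<bar> < 1 / Suc n}) \<in> sets path_space"
    using countable_rat by (intro sets.countable_INT' sets.countable_UN') auto
  moreover have "{g \<in> periodic_paths. \<exists>x\<in>{a..c}. g x = 0} =
      periodic_paths \<inter> (\<Inter>n::nat. \<Union>q\<in>?D. {g. \<bar>g q\<bar> < 1 / Suc n})"
    using has_zero_iff_rational_approx[OF _ assms] by (auto simp: periodic_paths_def)
  ultimately show ?thesis by (auto simp: sets_restrict_space)
qed

lemma first_zero_measurable:
  "(\<lambda>g. first_zero g {a..b}) \<in> borel_measurable (restrict_space path_space periodic_paths)"
proof (rule borel_measurableI_le)
  fix y :: ereal
  let ?S = "{g \<in> space (restrict_space path_space periodic_paths). first_zero g {a..b} \<le> y}"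
  show "?S \<in> sets (restrict_space path_space periodic_paths)"
  proof (cases y)
    case (real s)
    have S: "?S = {g \<in> periodic_paths. \<exists>x\<in>{a..min b s}. g x = 0}"
      unfolding space_restrict_periodic_paths real
      by (simp add: periodic_paths_def first_zero_le_iff cong: conj_cong)
    show ?thesis
    proof (cases "a \<le> min b s")
      case True
      then show ?thesis unfolding S by (rule sets_has_zero_in_interval)
    next
      case False
      then have "{a..min b s} = {}" by simp
      then show ?thesis unfolding S by simp
    qed
  next
    case MInf
    then have "?S = {}" by (auto simp: first_zero_def)
    then show ?thesis by (metis sets.empty_sets)
  next
    case PInf
    then show ?thesis using sets.top[of "restrict_space path_space periodic_paths"] by simp
  qed
qed

lemma shift_periodic_paths:
  assumes "g \<in> periodic_paths"
  shows "shift c g \<in> periodic_paths"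
proof -
  have cont: "continuous_on UNIV g" and per: "\<And>x. g (x + 1) = g x"
    using assms by (auto simp: periodic_paths_def period1_def)
  have "g (x + 1 + c) = g (x + c)" for x using per[of "x + c"] by (simp add: ac_simps)
  then show ?thesis
    unfolding periodic_paths_def period1_def shift_def
    by (auto intro!: continuous_on_compose2[OF cont] continuous_intros)
qed

lemma shift_path_measurable: "shift c \<in> path_space \<rightarrow>\<^sub>M path_space"
  unfolding shift_def by (rule measurable_PiM_single') (auto simp: space_PiM)

lemma first_zero_shift:
  assumes "g \<in> periodic_paths"
  shows "first_zero g {a..b} = first_zero (shift c g) {a - c..b - c} + ereal c"
proof (cases "\<exists>x\<in>{a..b}. g x = 0")
  case True
  obtain m where m: "m \<in> {a..b}" "g m = 0" "\<And>y. y \<in> {a..b} \<Longrightarrow> g y = 0 \<Longrightarrow> m \<le> y"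
    "first_zero g {a..b} = ereal m"
    using assms True first_zero_attained[of g a b] by (auto simp: periodic_paths_def)
  have "first_zero (shift c g) {a - c..b - c} = ereal (m - c)"
  proof (rule first_zero_eqI)
    fix y assume "y \<in> {a - c..b - c}" "shift c g y = 0"
    then show "m - c \<le> y" using m(3)[of "y + c"] by (auto simp: shift_def)
  qed (use m in \<open>auto simp: shift_def\<close>)
  then show ?thesis using m(4) by simp
next
  case False
  then have "\<not> (\<exists>x\<in>{a - c..b - c}. shift c g x = 0)"
    by (auto simp: shift_def)
  then show ?thesis using False by (simp add: first_zero_eq_infinity)
qed

lemma image_minus_atLeastAtMost: "(\<lambda>x. x - c) ` {a..b} = {a - c..b - (c::real)}"
  by (auto intro: image_eqI[of _ _ "_ + c"])

lemma cintervalsE: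
  assumes "I \<in> cintervals"
  obtains a b where "I = {a..b}" "a < b"
  using assms unfolding cintervals_def by auto

lemma intrinsic_location_first_zero: "intrinsic_location periodic_paths first_zero"
  unfolding intrinsic_location_def
proof (intro conjI ballI allI impI)
  show "shift_inv_class periodic_paths"
    using shift_periodic_paths by (auto simp: shift_inv_class_def periodic_paths_def)
next
  fix I assume "I \<in> cintervals"
  then show "(\<lambda>g. first_zero g I) \<in> borel_measurable (restrict_space path_space periodic_paths)"
    by (elim cintervalsE) (simp add: first_zero_measurable)
next
  fix g I assume g: "g \<in> periodic_paths" and "I \<in> cintervals"
  then obtain a b where I: "I = {a..b}" by (elim cintervalsE)
  show "first_zero g I \<in> ereal ` I \<union> {\<infinity>}"
  proof (cases "\<exists>x\<in>{a..b}. g x = 0")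
    case True
    then obtain m where "m \<in> {a..b}" "first_zero g {a..b} = ereal m"
      using first_zero_attained[OF periodic_paths_continuous[OF g]] by blast
    then show ?thesis using I by simp
  qed (simp add: I first_zero_eq_infinity)
  show "first_zero g I = first_zero (shift c g) ((\<lambda>x. x - c) ` I) + ereal c" for c
    using first_zero_shift[OF g] by (simp add: I image_minus_atLeastAtMost)
next
  fix g I1 I2 assume g: "g \<in> periodic_paths" and "I1 \<in> cintervals"
    and sub: "I2 \<subseteq> I1" and in_I2: "first_zero g I1 \<in> ereal ` I2"
  then obtain a b where I1: "I1 = {a..b}" by (elim cintervalsE)
  have "\<exists>x\<in>{a..b}. g x = 0"
    using in_I2 I1 by (auto simp: first_zero_def split: if_splits)
  then obtain m where m: "m \<in> {a..b}" "g m = 0" "\<And>y. y \<in> {a..b} \<Longrightarrow> g y = 0 \<Longrightarrow> m \<le> y"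
    "first_zero g {a..b} = ereal m"
    using first_zero_attained[OF periodic_paths_continuous[OF g]] by blast
  have "first_zero g I2 = ereal m"
    by (rule first_zero_eqI) (use m in_I2 sub I1 in auto)
  then show "first_zero g I2 = first_zero g I1" using m(4) I1 by simp
next
  fix g I1 I2 assume "I2 \<subseteq> I1" and "first_zero g I2 \<noteq> \<infinity>"
  then show "first_zero g I1 \<noteq> \<infinity>" unfolding first_zero_def by (auto split: if_splits)
qed

lemma maximal_elems_ge_minimum:
  assumes "m \<in> A" "\<And>y. y \<in> A \<Longrightarrow> m \<le> y"
  shows "maximal_elems (\<lambda>s t. t \<le> s) A = {m}"
  using assms unfolding maximal_elems_def by (auto intro: antisym)

lemma first_zero_maximal_elem:
  assumes g: "g \<in> periodic_paths" and "I \<in> cintervals" and "{x. g x = 0} \<inter> I \<noteq> {}"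
  shows "\<exists>m. maximal_elems (\<lambda>s t. t \<le> s) ({x. g x = 0} \<inter> I) = {m} \<and> first_zero g I = ereal m"
proof -
  obtain a b where I: "I = {a..b}" using assms(2) by (elim cintervalsE)
  then have "\<exists>x\<in>{a..b}. g x = 0" using assms(3) by auto
  then obtain m where m: "m \<in> {a..b}" "g m = 0" "\<And>y. y \<in> {a..b} \<Longrightarrow> g y = 0 \<Longrightarrow> m \<le> y"
    "first_zero g {a..b} = ereal m"
    using first_zero_attained[OF periodic_paths_continuous[OF g]] by blast
  have "maximal_elems (\<lambda>s t. t \<le> s) ({x. g x = 0} \<inter> I) = {m}"
    by (rule maximal_elems_ge_minimum) (use m I in auto)
  then show ?thesis using m(4) I by auto
qed

lemma first_time_first_zero: "first_time periodic_paths first_zero"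
  unfolding first_time_def
proof (intro conjI intrinsic_location_first_zero exI[of _ "\<lambda>g. {x. g x = 0}"]
    exI[of _ "\<lambda>g s t. t \<le> s"] ballI allI impI)
  fix g :: "real \<Rightarrow> real" and c
  show "{x. g x = 0} = (\<lambda>t. t + c) ` {x. shift c g x = 0}"
    by (auto simp: shift_def intro: image_eqI[of _ _ "_ - c"])
qed (auto intro: first_zero_eq_infinity first_zero_maximal_elem
    simp: partial_order_on_def preorder_on_def refl_on_def trans_on_def antisym_on_def)

section \<open>Sawtooth paths vanishing off prescribed gaps\<close>

definition cumlen :: "(real \<Rightarrow> real) \<Rightarrow> nat \<Rightarrow> real \<Rightarrow> real" where
  "cumlen lam k v = (\<Sum>j<k. lam (real j + v))"

definition tent :: "real \<Rightarrow> real \<Rightarrow> real \<Rightarrow> real" where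
  "tent a b y = max 0 (min (y - a) (b - y))"

definition tooth :: "(real \<Rightarrow> real) \<Rightarrow> real \<Rightarrow> nat \<times> int \<Rightarrow> real \<Rightarrow> real" where
  "tooth lam v i = tent (cumlen lam (fst i) v + of_int (snd i)) (cumlen lam (Suc (fst i)) v + of_int (snd i))"

definition sawtooth :: "(real \<Rightarrow> real) \<Rightarrow> real \<Rightarrow> real \<Rightarrow> real" where
  "sawtooth lam v y = (SUP i. tooth lam v i y)"

definition sawtooth_path :: "(real \<Rightarrow> real) \<Rightarrow> real \<times> real \<Rightarrow> real \<Rightarrow> real" where
  "sawtooth_path lam p = (\<lambda>x. sawtooth lam (fst p) (x + snd p))"

lemma cumlen_Suc: "cumlen lam (Suc k) v = cumlen lam k v + lam (real k + v)"
  by (simp add: cumlen_def)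

lemma tent_pos_iff: "0 < tent a b y \<longleftrightarrow> a < y \<and> y < b"
  by (auto simp: tent_def)

locale gap_sequence =
  fixes lam :: "real \<Rightarrow> real" and K :: real
  assumes lam_measurable [measurable]: "lam \<in> borel_measurable borel"
    and lam_nonneg: "0 \<le> lam w" and lam_le: "lam w \<le> K"
begin

lemma cumlen_mono: "k \<le> k' \<Longrightarrow> cumlen lam k v \<le> cumlen lam k' v"
  unfolding cumlen_def by (rule sum_mono2) (auto intro: lam_nonneg)

lemma cumlen_nonneg: "0 \<le> cumlen lam k v"
  unfolding cumlen_def by (intro sum_nonneg lam_nonneg)

lemma gap_unique:
  assumes "cumlen lam j v < u" "u < cumlen lam (Suc j) v" "cumlen lam k v < u" "u < cumlen lam (Suc k) v"
  shows "j = k"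
proof (rule ccontr)
  assume "j \<noteq> k"
  then consider "Suc j \<le> k" | "Suc k \<le> j" by linarith
  then show False
    using assms cumlen_mono[of "Suc j" k v] cumlen_mono[of "Suc k" j v] by cases auto
qed

lemma tooth_nonneg: "0 \<le> tooth lam v i y"
  by (simp add: tooth_def tent_def)

lemma tooth_le: "tooth lam v i y \<le> K"
  using lam_le[of "real (fst i) + v"] lam_nonneg[of "real (fst i) + v"]
  by (simp add: tooth_def tent_def cumlen_Suc)

lemma tooth_le_sawtooth: "tooth lam v i y \<le> sawtooth lam v y"
  unfolding sawtooth_def by (rule cSUP_upper) (auto intro: bdd_aboveI2 tooth_le)

lemma sawtooth_lipschitz: "sawtooth lam v y \<le> sawtooth lam v z + \<bar>y - z\<bar>"
  unfolding sawtooth_def[of lam v y]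
proof (rule cSUP_least)
  fix i
  have "tooth lam v i y \<le> tooth lam v i z + \<bar>y - z\<bar>" by (simp add: tooth_def tent_def)
  then show "tooth lam v i y \<le> sawtooth lam v z + \<bar>y - z\<bar>"
    using tooth_le_sawtooth[of v i z] by linarith
qed simp

lemma continuous_sawtooth: "continuous_on UNIV (sawtooth lam v)"
proof (rule lipschitz_on_continuous_on)
  show "1-lipschitz_on UNIV (sawtooth lam v)"
  proof (rule lipschitz_onI)
    fix y z
    show "dist (sawtooth lam v y) (sawtooth lam v z) \<le> 1 * dist y z"
      using sawtooth_lipschitz[of v y z] sawtooth_lipschitz[of v z y]
      by (simp add: dist_real_def abs_le_iff abs_minus_commute)
  qed simp
qed

lemma sawtooth_add_of_int: "sawtooth lam v (y + of_int m) = sawtooth lam v y"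
proof -
  have shift_tooth: "tooth lam v (k, n) (y + of_int m) = tooth lam v (k, n - m) y" for k n
    by (simp add: tooth_def tent_def algebra_simps)
  have "range (\<lambda>i. tooth lam v i (y + of_int m)) = range (\<lambda>i. tooth lam v i y)"
  proof (intro set_eqI iffI)
    fix r assume "r \<in> range (\<lambda>i. tooth lam v i (y + of_int m))"
    then obtain k n where "r = tooth lam v (k, n) (y + of_int m)" by auto
    then show "r \<in> range (\<lambda>i. tooth lam v i y)" by (simp add: shift_tooth)
  next
    fix r assume "r \<in> range (\<lambda>i. tooth lam v i y)"
    then obtain k n where "r = tooth lam v (k, n) y" by auto
    then have "r = tooth lam v (k, n + m) (y + of_int m)" by (simp add: shift_tooth)
    then show "r \<in> range (\<lambda>i. tooth lam v i (y + of_int m))" by blast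
  qed
  then show ?thesis unfolding sawtooth_def by simp
qed

lemma sawtooth_eq_0_iff:
  "sawtooth lam v y = 0 \<longleftrightarrow> \<not> (\<exists>k n. cumlen lam k v + of_int n < y \<and> y < cumlen lam (Suc k) v + of_int n)"
proof
  assume "sawtooth lam v y = 0"
  then have "\<not> 0 < tooth lam v (k, n) y" for k n
    using tooth_le_sawtooth[of v "(k, n)" y] by linarith
  then show "\<not> (\<exists>k n. cumlen lam k v + of_int n < y \<and> y < cumlen lam (Suc k) v + of_int n)"
    by (auto simp: tooth_def tent_pos_iff)
next
  assume no_gap: "\<not> (\<exists>k n. cumlen lam k v + of_int n < y \<and> y < cumlen lam (Suc k) v + of_int n)"
  have "tooth lam v i y = 0" for i
  proof -
    have "\<not> 0 < tooth lam v i y" using no_gap by (cases i) (auto simp: tooth_def tent_pos_iff)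
    then show ?thesis using tooth_nonneg[of v i y] by linarith
  qed
  then show "sawtooth lam v y = 0" by (simp add: sawtooth_def)
qed

lemma sawtooth_path_periodic: "sawtooth_path lam p \<in> periodic_paths"
proof -
  have "continuous_on UNIV (\<lambda>x. sawtooth lam (fst p) (x + snd p))"
    by (intro continuous_on_compose2[OF continuous_sawtooth]) (auto intro: continuous_intros)
  moreover have "sawtooth lam (fst p) (x + 1 + snd p) = sawtooth lam (fst p) (x + snd p)" for x
    using sawtooth_add_of_int[of "fst p" "x + snd p" 1] by (simp add: ac_simps)
  ultimately show ?thesis by (simp add: periodic_paths_def period1_def sawtooth_path_def)
qed

lemma shift_sawtooth_path: "shift c (sawtooth_path lam (v, u)) = sawtooth_path lam (v, frac (u + c))"
proof
  fix x
  have "sawtooth lam v (x + frac (u + c)) = sawtooth lam v (x + (u + c) + of_int (- \<lfloor>u + c\<rfloor>))"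
    by (simp add: frac_def algebra_simps)
  also have "\<dots> = sawtooth lam v (x + (u + c))" by (rule sawtooth_add_of_int)
  finally show "shift c (sawtooth_path lam (v, u)) x = sawtooth_path lam (v, frac (u + c)) x"
    by (simp add: shift_def sawtooth_path_def ac_simps)
qed

lemma sawtooth_path_measurable: "sawtooth_path lam \<in> lborel \<Otimes>\<^sub>M lborel \<rightarrow>\<^sub>M path_space"
proof (rule measurable_PiM_single')
  fix x
  show "(\<lambda>p. sawtooth_path lam p x) \<in> borel_measurable (lborel \<Otimes>\<^sub>M lborel)"
    unfolding sawtooth_path_def sawtooth_def
  proof (rule borel_measurable_cSUP)
    fix i
    show "(\<lambda>p. tooth lam (fst p) i (x + snd p)) \<in> borel_measurable (lborel \<Otimes>\<^sub>M lborel)"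
      unfolding tooth_def tent_def cumlen_def by measurable
  next
    fix p
    show "bdd_above (range (\<lambda>i. tooth lam (fst p) i (x + snd p)))"
      by (rule bdd_aboveI2[of _ _ K]) (rule tooth_le)
  qed simp
qed (simp add: space_PiM)

end

section \<open>A uniformly random phase\<close>

lemma nn_integral_lborel_translate:
  fixes f :: "real \<Rightarrow> ennreal"
  assumes "f \<in> borel_measurable borel"
  shows "(\<integral>\<^sup>+x. f (x + t) \<partial>lborel) = (\<integral>\<^sup>+x. f x \<partial>lborel)"
  using nn_integral_real_affine[OF assms, of 1 t] by (simp add: add.commute)

lemma frac_measurable [measurable]: "frac \<in> borel_measurable (borel :: real measure)"
  unfolding frac_def by measurable

lemma frac_add_split:
  assumes "0 \<le> d" "d < 1"
  shows "indicator {0..<1} u * \<phi> (frac (u + d)) =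
    indicator {0..<1-d} u * \<phi> (u + d) + indicator {1-d..<1} u * (\<phi> (u + d - 1) :: ennreal)"
proof (cases "u \<in> {0..<1-d}")
  case True
  then have "frac (u + d) = u + d" using assms by (intro frac_eq[THEN iffD2]) auto
  then show ?thesis using True assms by (simp add: indicator_def)
next
  case False
  show ?thesis
  proof (cases "u \<in> {1-d..<1}")
    case True
    then have "\<lfloor>u + d\<rfloor> = 1" using assms by (intro floor_unique) auto
    then have "frac (u + d) = u + d - 1" by (simp add: frac_def)
    then show ?thesis using True False assms by (simp add: indicator_def)
  next
    case outside: False
    then show ?thesis using False by (auto simp: indicator_def)
  qed
qed

lemma nn_integral_unit_interval_frac_shift:
  fixes \<phi> :: "real \<Rightarrow> ennreal"
  assumes [measurable]: "\<phi> \<in> borel_measurable borel"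
  shows "(\<integral>\<^sup>+u. indicator {0..<1} u * \<phi> (frac (u + c)) \<partial>lborel) = (\<integral>\<^sup>+u. indicator {0..<1} u * \<phi> u \<partial>lborel)"
proof -
  define d where "d = frac c"
  have d: "0 \<le> d" "d < 1" unfolding d_def by (auto simp: frac_lt_1)
  have "frac (u + c) = frac (u + d)" for u
    using frac_add_of_int_right[of "u + d" "\<lfloor>c\<rfloor>"] by (simp add: d_def frac_def)
  then have "(\<integral>\<^sup>+u. indicator {0..<1} u * \<phi> (frac (u + c)) \<partial>lborel) =
      (\<integral>\<^sup>+u. indicator {0..<1-d} u * \<phi> (u + d) \<partial>lborel) + (\<integral>\<^sup>+u. indicator {1-d..<1} u * \<phi> (u + d - 1) \<partial>lborel)"
    by (simp add: frac_add_split[OF d] nn_integral_add)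
  also have "\<dots> = (\<integral>\<^sup>+w. indicator {d..<1} w * \<phi> w \<partial>lborel) + (\<integral>\<^sup>+w. indicator {0..<d} w * \<phi> w \<partial>lborel)"
    using nn_integral_lborel_translate[of "\<lambda>w. indicator {0..<1-d} (w - d) * \<phi> w" d]
      nn_integral_lborel_translate[of "\<lambda>w. indicator {1-d..<1} (w - (d - 1)) * \<phi> w" "d - 1"]
    by (simp add: indicator_def atLeastLessThan_iff algebra_simps cong: if_cong)
  also have "\<dots> = (\<integral>\<^sup>+w. indicator {d..<1} w * \<phi> w + indicator {0..<d} w * \<phi> w \<partial>lborel)"
    by (rule nn_integral_add[symmetric]) measurable
  also have "\<dots> = (\<integral>\<^sup>+w. indicator {0..<1} w * \<phi> w \<partial>lborel)"
    using d by (intro nn_integral_cong) (auto simp: indicator_def)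
  finally show ?thesis .
qed

definition unit_square :: "(real \<times> real) set" where
  "unit_square = {0..<1} \<times> {0..<1}"

definition uniform_square :: "(real \<times> real) measure" where
  "uniform_square = uniform_measure (lborel \<Otimes>\<^sub>M lborel) unit_square"

definition rotate_phase :: "real \<Rightarrow> real \<times> real \<Rightarrow> real \<times> real" where
  "rotate_phase c p = (fst p, frac (snd p + c))"

lemma sets_unit_square [measurable]: "unit_square \<in> sets (borel \<Otimes>\<^sub>M borel)"
  unfolding unit_square_def by (intro pair_measureI) auto

lemma emeasure_unit_square: "emeasure (lborel \<Otimes>\<^sub>M lborel) unit_square = 1"
  unfolding unit_square_def by (subst lborel.emeasure_pair_measure_Times) auto

lemma prob_space_uniform_square: "prob_space uniform_square"
  unfolding uniform_square_def by (rule prob_space_uniform_measure) (simp_all add: emeasure_unit_square)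

lemma sets_uniform_square [simp, measurable_cong]: "sets uniform_square = sets (lborel \<Otimes>\<^sub>M lborel)"
  unfolding uniform_square_def by simp

lemma space_uniform_square [simp]: "space uniform_square = UNIV"
  unfolding uniform_square_def by (simp add: space_pair_measure)

lemma emeasure_uniform_square:
  "B \<in> sets (lborel \<Otimes>\<^sub>M lborel) \<Longrightarrow> emeasure uniform_square B = emeasure (lborel \<Otimes>\<^sub>M lborel) (unit_square \<inter> B)"
  unfolding uniform_square_def
  by (subst emeasure_uniform_measure) (simp_all add: emeasure_unit_square divide_ennreal_def)

lemma emeasure_uniform_square_iterated:
  assumes "B \<in> sets (lborel \<Otimes>\<^sub>M lborel)"
  shows "emeasure uniform_square B = (\<integral>\<^sup>+v. \<integral>\<^sup>+u. indicator (unit_square \<inter> B) (v, u) \<partial>lborel \<partial>lborel)"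
proof -
  have "unit_square \<inter> B \<in> sets (lborel \<Otimes>\<^sub>M lborel)" using assms by simp
  then show ?thesis
    unfolding emeasure_uniform_square[OF assms] by (rule lborel.emeasure_pair_measure)
qed

lemma rotate_phase_measurable [measurable]: "rotate_phase c \<in> lborel \<Otimes>\<^sub>M lborel \<rightarrow>\<^sub>M lborel \<Otimes>\<^sub>M lborel"
  unfolding rotate_phase_def by measurable

lemma distr_uniform_square_rotate_phase: "distr uniform_square (lborel \<Otimes>\<^sub>M lborel) (rotate_phase c) = uniform_square"
proof (rule measure_eqI)
  fix A assume "A \<in> sets (distr uniform_square (lborel \<Otimes>\<^sub>M lborel) (rotate_phase c))"
  then have A [measurable]: "A \<in> sets (borel \<Otimes>\<^sub>M borel)" by simp
  have "rotate_phase c -` A \<inter> space (lborel \<Otimes>\<^sub>M lborel) \<in> sets (lborel \<Otimes>\<^sub>M lborel)"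
    by (rule measurable_sets[OF rotate_phase_measurable]) (simp add: A)
  then have preimage [measurable]: "rotate_phase c -` A \<in> sets (borel \<Otimes>\<^sub>M borel)"
    by (simp add: space_pair_measure)
  have slice: "(\<integral>\<^sup>+u. indicator (unit_square \<inter> rotate_phase c -` A) (v, u) \<partial>lborel) =
      (\<integral>\<^sup>+u. indicator (unit_square \<inter> A) (v, u) \<partial>lborel)" for v
  proof -
    have "(\<integral>\<^sup>+u. indicator (unit_square \<inter> rotate_phase c -` A) (v, u) \<partial>lborel) =
        indicator {0..<1} v * (\<integral>\<^sup>+u. indicator {0..<1} u * indicator A (v, frac (u + c)) \<partial>lborel)"
      by (subst nn_integral_cmult[symmetric]) (auto intro!: nn_integral_cong
          simp: indicator_def unit_square_def rotate_phase_def)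
    also have "\<dots> = indicator {0..<1} v * (\<integral>\<^sup>+u. indicator {0..<1} u * indicator A (v, u) \<partial>lborel)"
      by (subst nn_integral_unit_interval_frac_shift) simp_all
    also have "\<dots> = (\<integral>\<^sup>+u. indicator (unit_square \<inter> A) (v, u) \<partial>lborel)"
      by (subst nn_integral_cmult[symmetric]) (auto intro!: nn_integral_cong
          simp: indicator_def unit_square_def)
    finally show ?thesis .
  qed
  have "emeasure (distr uniform_square (lborel \<Otimes>\<^sub>M lborel) (rotate_phase c)) A =
      emeasure uniform_square (rotate_phase c -` A)"
    by (subst emeasure_distr) (simp_all add: A)
  also have "\<dots> = emeasure uniform_square A"
    by (simp add: emeasure_uniform_square_iterated slice)
  finally show "emeasure (distr uniform_square (lborel \<Otimes>\<^sub>M lborel) (rotate_phase c)) A = emeasure uniform_square A" .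
qed simp

text \<open>The sample space of a periodic stationary process has type \<open>real \<Rightarrow> real\<close>, so the
  uniform point of the square is encoded as a path through its values at \<open>0\<close> and \<open>1\<close>.\<close>
definition encode_pair :: "real \<times> real \<Rightarrow> real \<Rightarrow> real" where
  "encode_pair p = (\<lambda>x. if x = 0 then fst p else snd p)"

definition encoded_square :: "(real \<Rightarrow> real) measure" where
  "encoded_square = distr uniform_square path_space encode_pair"

lemma encode_pair_measurable: "encode_pair \<in> uniform_square \<rightarrow>\<^sub>M path_space"
  unfolding encode_pair_def measurable_cong_sets[OF sets_uniform_square refl]
  by (rule measurable_PiM_single') (auto simp: space_PiM)

lemma sets_encoded_square [simp, measurable_cong]: "sets encoded_square = sets path_space"
  by (simp add: encoded_square_def)

lemma prob_space_encoded_square: "prob_space encoded_square"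
  unfolding encoded_square_def
  by (rule prob_space.prob_space_distr[OF prob_space_uniform_square encode_pair_measurable])

lemma decode_pair_measurable: "(\<lambda>\<omega>::real \<Rightarrow> real. (\<omega> 0, \<omega> 1)) \<in> path_space \<rightarrow>\<^sub>M lborel \<Otimes>\<^sub>M lborel"
  unfolding measurable_lborel1 by (intro measurable_Pair measurable_component_singleton) simp_all

context gap_sequence
begin

definition sawtooth_process :: "(real \<Rightarrow> real) \<Rightarrow> real \<Rightarrow> real" where
  "sawtooth_process \<omega> = sawtooth_path lam (\<omega> 0, \<omega> 1)"

lemma sawtooth_process_encode_pair: "sawtooth_process (encode_pair p) = sawtooth_path lam p"
  by (simp add: sawtooth_process_def encode_pair_def)

lemma sawtooth_process_measurable: "sawtooth_process \<in> path_space \<rightarrow>\<^sub>M path_space"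
  using measurable_comp[OF decode_pair_measurable sawtooth_path_measurable]
  by (simp add: comp_def sawtooth_process_def[abs_def])

lemma distr_encoded_square_comp:
  assumes "h \<in> path_space \<rightarrow>\<^sub>M path_space"
  shows "distr encoded_square path_space h = distr uniform_square path_space (h \<circ> encode_pair)"
  unfolding encoded_square_def by (rule distr_distr[OF assms encode_pair_measurable])

lemma periodic_stationary_sawtooth_process:
  "periodic_stationary periodic_paths encoded_square sawtooth_process"
  unfolding periodic_stationary_def
proof (intro conjI ballI allI)
  show "sawtooth_process \<in> encoded_square \<rightarrow>\<^sub>M path_space"
    using sawtooth_process_measurable by (simp add: measurable_cong_sets[OF sets_encoded_square refl])
  fix \<omega>
  show "sawtooth_process \<omega> \<in> periodic_paths"
    unfolding sawtooth_process_def by (rule sawtooth_path_periodic)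
  then show "continuous_on UNIV (sawtooth_process \<omega>)" "period1 (sawtooth_process \<omega>)"
    by (simp_all add: periodic_paths_def)
next
  fix c
  have rotate_measurable: "rotate_phase c \<in> uniform_square \<rightarrow>\<^sub>M lborel \<Otimes>\<^sub>M lborel"
    by (simp add: measurable_cong_sets[OF sets_uniform_square refl])
  have "distr encoded_square path_space (\<lambda>\<omega>. shift c (sawtooth_process \<omega>)) =
      distr uniform_square path_space ((\<lambda>\<omega>. shift c (sawtooth_process \<omega>)) \<circ> encode_pair)"
    using measurable_comp[OF sawtooth_process_measurable shift_path_measurable]
    by (intro distr_encoded_square_comp) (simp add: comp_def)
  also have "(\<lambda>\<omega>. shift c (sawtooth_process \<omega>)) \<circ> encode_pair = sawtooth_path lam \<circ> rotate_phase c"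
    by (auto simp: sawtooth_process_encode_pair shift_sawtooth_path rotate_phase_def)
  also have "distr uniform_square path_space (sawtooth_path lam \<circ> rotate_phase c) =
      distr (distr uniform_square (lborel \<Otimes>\<^sub>M lborel) (rotate_phase c)) path_space (sawtooth_path lam)"
    by (rule distr_distr[symmetric, OF sawtooth_path_measurable rotate_measurable])
  also have "\<dots> = distr uniform_square path_space (sawtooth_process \<circ> encode_pair)"
    by (simp add: distr_uniform_square_rotate_phase comp_def sawtooth_process_encode_pair)
  also have "\<dots> = distr encoded_square path_space sawtooth_process"
    by (rule distr_encoded_square_comp[symmetric, OF sawtooth_process_measurable])
  finally show "distr encoded_square path_space (\<lambda>\<omega>. shift c (sawtooth_process \<omega>)) =
      distr encoded_square path_space sawtooth_process" .
qed (rule prob_space_encoded_square)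

end

section \<open>The law of the first zero\<close>

lemma ereal_image_sets_borel:
  assumes "A \<in> sets (borel :: real measure)"
  shows "ereal ` A \<in> sets (borel :: ereal measure)"
proof -
  have "{x \<in> space borel. real_of_ereal x \<in> A} \<in> sets (borel :: ereal measure)"
    using assms by measurable
  then have "{x \<in> space borel. real_of_ereal x \<in> A} - {\<infinity>, -\<infinity>} \<in> sets (borel :: ereal measure)"
    by auto
  moreover have "{x \<in> space borel. real_of_ereal x \<in> A} - {\<infinity>, -\<infinity>} = ereal ` A"
  proof (intro set_eqI iffI)
    fix x assume "x \<in> {x \<in> space borel. real_of_ereal x \<in> A} - {\<infinity>, -\<infinity>}"
    then show "x \<in> ereal ` A" by (cases x) auto
  qed auto
  ultimately show ?thesis by simp
qed

lemma suminf_indicator_unit_intervals: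
  fixes c :: ennreal
  shows "(\<Sum>k. indicator {real k..<real k + 1} w * c) = indicator {0..} w * c"
proof (cases "0 \<le> w")
  case True
  have floor: "\<lfloor>w\<rfloor> = int k" if "w \<in> {real k..<real k + 1}" for k
    using that by (intro floor_unique) auto
  have "(\<Sum>k. indicator {real k..<real k + 1} w * c) = (\<Sum>k\<in>{nat \<lfloor>w\<rfloor>}. indicator {real k..<real k + 1} w * c)"
  proof (rule suminf_finite)
    fix k assume "k \<notin> {nat \<lfloor>w\<rfloor>}"
    then have "w \<notin> {real k..<real k + 1}" using floor by force
    then show "indicator {real k..<real k + 1} w * c = 0" by simp
  qed simp
  also have "\<dots> = c" using True by (simp add: indicator_def)
  finally show ?thesis using True by simp
qed simp

lemma suminf_nn_integral_unit_translates:
  fixes h :: "real \<Rightarrow> ennreal"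
  assumes [measurable]: "h \<in> borel_measurable borel"
  shows "(\<Sum>k. \<integral>\<^sup>+v. indicator {0..<1} v * h (real k + v) \<partial>lborel) = (\<integral>\<^sup>+w. indicator {0..} w * h w \<partial>lborel)"
proof -
  have "(\<integral>\<^sup>+v. indicator {0..<1} v * h (real k + v) \<partial>lborel) =
      (\<integral>\<^sup>+w. indicator {real k..<real k + 1} w * h w \<partial>lborel)" for k
    using nn_integral_lborel_translate[of "\<lambda>w. indicator {real k..<real k + 1} w * h w" "real k"]
    by (simp add: indicator_def add.commute cong: if_cong)
  then have "(\<Sum>k. \<integral>\<^sup>+v. indicator {0..<1} v * h (real k + v) \<partial>lborel) =
      (\<Sum>k. \<integral>\<^sup>+w. indicator {real k..<real k + 1} w * h w \<partial>lborel)"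
    by simp
  also have "\<dots> = (\<integral>\<^sup>+w. (\<Sum>k. indicator {real k..<real k + 1} w * h w) \<partial>lborel)"
    by (rule nn_integral_suminf[symmetric]) measurable
  also have "\<dots> = (\<integral>\<^sup>+w. indicator {0..} w * h w \<partial>lborel)"
    by (simp only: suminf_indicator_unit_intervals)
  finally show ?thesis .
qed

lemma suminf_of_bool_le_ceiling:
  fixes a v :: real
  assumes "0 \<le> v"
  shows "(\<Sum>j. of_bool (real j + v < a) :: ennreal) \<le> ennreal (of_int \<lceil>a\<rceil>)"
proof -
  have "of_bool (real j + v < a) = (0 :: ennreal)" if "j \<notin> {..<nat \<lceil>a\<rceil>}" for j
  proof -
    from that have "\<lceil>a\<rceil> \<le> int j" by simp
    then have "a \<le> of_int (int j)" by (simp only: ceiling_le_iff)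
    then show ?thesis using assms by simp
  qed
  then have "(\<Sum>j. of_bool (real j + v < a) :: ennreal) = (\<Sum>j<nat \<lceil>a\<rceil>. of_bool (real j + v < a))"
    by (intro suminf_finite) auto
  also have "\<dots> \<le> (\<Sum>j<nat \<lceil>a\<rceil>. 1)" by (intro sum_mono) simp
  also have "\<dots> \<le> ennreal (of_int \<lceil>a\<rceil>)"
    by (cases "0 \<le> \<lceil>a\<rceil>") (simp_all add: ennreal_of_nat_eq_real_of_nat)
  finally show ?thesis .
qed

context gap_sequence
begin

lemma cumlen_not_in_gap: "\<not> (cumlen lam j v < cumlen lam k v \<and> cumlen lam k v < cumlen lam (Suc j) v)"
proof (cases "k \<le> j")
  case True
  then show ?thesis using cumlen_mono[of k j v] by auto
next
  case False
  then show ?thesis using cumlen_mono[of "Suc j" k v] by auto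
qed

lemma first_zero_sawtooth_path_measurable:
  "(\<lambda>p. first_zero (sawtooth_path lam p) {a..b}) \<in> borel_measurable (lborel \<Otimes>\<^sub>M lborel)"
proof -
  have "sawtooth_path lam \<in> lborel \<Otimes>\<^sub>M lborel \<rightarrow>\<^sub>M restrict_space path_space periodic_paths"
    by (rule measurable_restrict_space2) (simp_all add: sawtooth_path_measurable sawtooth_path_periodic Pi_iff)
  from measurable_comp[OF this first_zero_measurable] show ?thesis by (simp add: comp_def)
qed

lemma first_zero_sawtooth_process_measurable:
  "(\<lambda>\<omega>. first_zero (sawtooth_process \<omega>) {a..b}) \<in> borel_measurable path_space"
  using measurable_comp[OF decode_pair_measurable first_zero_sawtooth_path_measurable]
  by (simp add: comp_def sawtooth_process_def)

lemma nn_integral_gap_reflect: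
  assumes [measurable]: "A \<in> sets borel" and "A \<subseteq> {0<..}"
  shows "(\<integral>\<^sup>+u. indicator {cumlen lam k v<..<cumlen lam (Suc k) v} u * indicator A (cumlen lam (Suc k) v - u) \<partial>lborel) =
    (\<integral>\<^sup>+t. indicator A t * of_bool (t < lam (real k + v)) \<partial>lborel)"
proof -
  let ?a = "cumlen lam k v" and ?b = "cumlen lam (Suc k) v"
  have "indicator {?a<..<?b} (?b + (-1) * t) * indicator A (?b - (?b + (-1) * t)) =
      (indicator A t * of_bool (t < lam (real k + v)) :: ennreal)" for t
    using assms(2) by (cases "t \<in> A") (auto simp: indicator_def cumlen_Suc)
  then show ?thesis
    using nn_integral_real_affine[of "\<lambda>u. indicator {?a<..<?b} u * (indicator A (?b - u) :: ennreal)" "-1" ?b]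
    by simp
qed

end

locale unit_gap_sequence = gap_sequence +
  assumes K_pos: "0 < K"
    and cumlen_le_1: "0 \<le> v \<Longrightarrow> v < 1 \<Longrightarrow> cumlen lam k v \<le> 1"
begin

text \<open>Gaps shifted by a nonzero integer miss \<open>[0, 1]\<close>, since the unshifted gaps lie in \<open>[0, 1]\<close>.\<close>
lemma sawtooth_eq_0_off_gaps:
  assumes v: "0 \<le> v" "v < 1" and y: "0 \<le> y" "y \<le> 1"
    and off: "\<And>k. \<not> (cumlen lam k v < y \<and> y < cumlen lam (Suc k) v)"
  shows "sawtooth lam v y = 0"
  unfolding sawtooth_eq_0_iff
proof clarify
  fix k n assume gap: "cumlen lam k v + of_int n < y" "y < cumlen lam (Suc k) v + of_int n"
  consider "n = 0" | "n \<ge> 1" | "n \<le> -1" by linarith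
  then show False
  proof cases
    case 2
    then have "(1::real) \<le> of_int n" by simp
    then show False using gap cumlen_nonneg[of k v] y by linarith
  next
    case 3
    then have "of_int n \<le> (-1::real)" by simp
    then show False using gap cumlen_le_1[OF v, of "Suc k"] y by linarith
  qed (use gap off in auto)
qed

lemma first_zero_in_gap:
  assumes v: "0 \<le> v" "v < 1" and gap: "cumlen lam k v < u" "u < cumlen lam (Suc k) v"
  shows "first_zero (sawtooth_path lam (v, u)) {0..K} = ereal (cumlen lam (Suc k) v - u)"
proof (rule first_zero_eqI)
  show "cumlen lam (Suc k) v - u \<in> {0..K}"
    using gap lam_le[of "real k + v"] by (simp add: cumlen_Suc)
  show "sawtooth_path lam (v, u) (cumlen lam (Suc k) v - u) = 0"
    using sawtooth_eq_0_off_gaps[OF v cumlen_nonneg cumlen_le_1[OF v] cumlen_not_in_gap]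
    by (simp add: sawtooth_path_def)
next
  fix y assume y: "y \<in> {0..K}" "sawtooth_path lam (v, u) y = 0"
  show "cumlen lam (Suc k) v - u \<le> y"
  proof (rule ccontr)
    assume "\<not> ?thesis"
    then have "cumlen lam k v + of_int 0 < y + u \<and> y + u < cumlen lam (Suc k) v + of_int 0"
      using y gap by auto
    moreover have "sawtooth lam v (y + u) = 0" using y(2) by (simp add: sawtooth_path_def)
    ultimately show False using sawtooth_eq_0_iff[of v "y + u"] by blast
  qed
qed

lemma first_zero_outside_gaps:
  assumes v: "0 \<le> v" "v < 1" and u: "0 \<le> u" "u < 1"
    and off: "\<And>k. \<not> (cumlen lam k v < u \<and> u < cumlen lam (Suc k) v)"
  shows "first_zero (sawtooth_path lam (v, u)) {0..K} = ereal 0"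
  using sawtooth_eq_0_off_gaps[OF v u(1) _ off] u K_pos
  by (intro first_zero_eqI) (auto simp: sawtooth_path_def)

lemma indicator_first_zero_in:
  assumes v: "0 \<le> v" "v < 1" and A: "A \<subseteq> {0<..<K}"
  shows "indicator (unit_square \<inter> {p. first_zero (sawtooth_path lam p) {0..K} \<in> ereal ` A}) (v, u) =
    (\<Sum>k. indicator {cumlen lam k v<..<cumlen lam (Suc k) v} u * indicator A (cumlen lam (Suc k) v - u) :: ennreal)"
proof (cases "\<exists>k. cumlen lam k v < u \<and> u < cumlen lam (Suc k) v")
  case True
  then obtain k where k: "cumlen lam k v < u" "u < cumlen lam (Suc k) v" by auto
  have "(v, u) \<in> unit_square"
    using k v cumlen_nonneg[of k v] cumlen_le_1[OF v, of "Suc k"] by (auto simp: unit_square_def)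
  then have "indicator (unit_square \<inter> {p. first_zero (sawtooth_path lam p) {0..K} \<in> ereal ` A}) (v, u) =
      (indicator A (cumlen lam (Suc k) v - u) :: ennreal)"
    using first_zero_in_gap[OF v k] by (simp add: indicator_def image_iff)
  also have "\<dots> = (\<Sum>j\<in>{k}. indicator {cumlen lam j v<..<cumlen lam (Suc j) v} u * indicator A (cumlen lam (Suc j) v - u))"
    using k by simp
  also have "\<dots> = (\<Sum>j. indicator {cumlen lam j v<..<cumlen lam (Suc j) v} u * indicator A (cumlen lam (Suc j) v - u))"
  proof (rule suminf_finite[symmetric])
    fix j assume "j \<notin> {k}"
    then have "u \<notin> {cumlen lam j v<..<cumlen lam (Suc j) v}" using gap_unique[OF _ _ k, of j] by auto
    then show "indicator {cumlen lam j v<..<cumlen lam (Suc j) v} u * indicator A (cumlen lam (Suc j) v - u) = (0::ennreal)"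
      by simp
  qed simp
  finally show ?thesis .
next
  case False
  then have "first_zero (sawtooth_path lam (v, u)) {0..K} = ereal 0" if "(v, u) \<in> unit_square"
    using that by (intro first_zero_outside_gaps[OF v]) (auto simp: unit_square_def)
  moreover have "0 \<notin> A" using A by auto
  ultimately have "indicator (unit_square \<inter> {p. first_zero (sawtooth_path lam p) {0..K} \<in> ereal ` A}) (v, u) = (0::ennreal)"
    by (auto simp: indicator_def)
  moreover have "indicator {cumlen lam k v<..<cumlen lam (Suc k) v} u = (0::ennreal)" for k
    using False by simp
  ultimately show ?thesis by simp
qed

lemma nn_integral_first_zero_slice:
  assumes A [measurable]: "A \<in> sets borel" "A \<subseteq> {0<..<K}"
  shows "(\<integral>\<^sup>+u. indicator (unit_square \<inter> {p. first_zero (sawtooth_path lam p) {0..K} \<in> ereal ` A}) (v, u) \<partial>lborel) =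
    indicator {0..<1} v * (\<integral>\<^sup>+t. indicator A t * (\<Sum>k. of_bool (t < lam (real k + v))) \<partial>lborel)"
proof (cases "v \<in> {0..<1}")
  case True
  then have "(\<integral>\<^sup>+u. indicator (unit_square \<inter> {p. first_zero (sawtooth_path lam p) {0..K} \<in> ereal ` A}) (v, u) \<partial>lborel) =
      (\<Sum>k. \<integral>\<^sup>+u. indicator {cumlen lam k v<..<cumlen lam (Suc k) v} u * indicator A (cumlen lam (Suc k) v - u) \<partial>lborel)"
    by (simp add: indicator_first_zero_in A nn_integral_suminf)
  also have "\<dots> = (\<Sum>k. \<integral>\<^sup>+t. indicator A t * of_bool (t < lam (real k + v)) \<partial>lborel)"
    using A(2) by (subst nn_integral_gap_reflect) auto
  also have "\<dots> = (\<integral>\<^sup>+t. (\<Sum>k. indicator A t * of_bool (t < lam (real k + v))) \<partial>lborel)"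
    by (rule nn_integral_suminf[symmetric]) measurable
  also have "\<dots> = (\<integral>\<^sup>+t. indicator A t * (\<Sum>k. of_bool (t < lam (real k + v))) \<partial>lborel)"
    by (simp add: ennreal_suminf_cmult)
  finally show ?thesis using True by simp
qed (auto simp: indicator_def unit_square_def)

lemma emeasure_superlevel_lam:
  "(\<Sum>k. \<integral>\<^sup>+v. indicator {0..<1} v * of_bool (t < lam (real k + v)) \<partial>lborel) =
    emeasure lborel {w. 0 \<le> w \<and> t < lam w}"
proof -
  have "(\<Sum>k. \<integral>\<^sup>+v. indicator {0..<1} v * of_bool (t < lam (real k + v)) \<partial>lborel) =
      (\<integral>\<^sup>+w. indicator {0..} w * of_bool (t < lam w) \<partial>lborel)"
    using suminf_nn_integral_unit_translates[of "\<lambda>w. of_bool (t < lam w)"] by simp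
  also have "\<dots> = (\<integral>\<^sup>+w. indicator {w. 0 \<le> w \<and> t < lam w} w \<partial>lborel)"
    by (intro nn_integral_cong) (simp add: indicator_def)
  also have "\<dots> = emeasure lborel {w. 0 \<le> w \<and> t < lam w}"
    by (rule nn_integral_indicator) measurable
  finally show ?thesis .
qed

lemma emeasure_first_zero_in:
  assumes A [measurable]: "A \<in> sets borel" "A \<subseteq> {0<..<K}"
  shows "emeasure uniform_square {p. first_zero (sawtooth_path lam p) {0..K} \<in> ereal ` A} =
    (\<integral>\<^sup>+t\<in>A. emeasure lborel {w. 0 \<le> w \<and> t < lam w} \<partial>lborel)"
proof -
  let ?Q = "{p. first_zero (sawtooth_path lam p) {0..K} \<in> ereal ` A}"
  let ?N = "\<lambda>v t. \<Sum>k. of_bool (t < lam (real k + v)) :: ennreal"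
  have "?Q \<in> sets (lborel \<Otimes>\<^sub>M lborel)"
    using measurable_sets[OF first_zero_sawtooth_path_measurable ereal_image_sets_borel[OF A(1)]]
    by (simp add: space_pair_measure vimage_def)
  then have "emeasure uniform_square ?Q = (\<integral>\<^sup>+v. \<integral>\<^sup>+t. indicator {0..<1} v * (indicator A t * ?N v t) \<partial>lborel \<partial>lborel)"
    by (simp add: emeasure_uniform_square_iterated nn_integral_first_zero_slice A nn_integral_cmult)
  also have "\<dots> = (\<integral>\<^sup>+t. \<integral>\<^sup>+v. indicator {0..<1} v * (indicator A t * ?N v t) \<partial>lborel \<partial>lborel)"
    by (rule lborel_pair.Fubini') measurable
  also have "\<dots> = (\<integral>\<^sup>+t. indicator A t * (\<Sum>k. \<integral>\<^sup>+v. indicator {0..<1} v * of_bool (t < lam (real k + v)) \<partial>lborel) \<partial>lborel)"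
    by (intro nn_integral_cong)
      (simp add: ac_simps nn_integral_cmult nn_integral_suminf[symmetric] ennreal_suminf_cmult)
  also have "\<dots> = (\<integral>\<^sup>+t\<in>A. emeasure lborel {w. 0 \<le> w \<and> t < lam w} \<partial>lborel)"
    by (simp add: emeasure_superlevel_lam mult.commute)
  finally show ?thesis .
qed

lemma first_zero_sawtooth_process_law:
  defines "F \<equiv> distr encoded_square borel (\<lambda>\<omega>. first_zero (sawtooth_process \<omega>) {0..K})"
  shows "F \<in> I_M K"
    and "\<And>A. A \<in> sets borel \<Longrightarrow> A \<subseteq> {0<..<K} \<Longrightarrow>
      emeasure F (ereal ` A) = (\<integral>\<^sup>+t\<in>A. emeasure lborel {w. 0 \<le> w \<and> t < lam w} \<partial>lborel)"
proof -
  show "F \<in> I_M K"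
    unfolding F_def I_M_def using first_time_first_zero periodic_stationary_sawtooth_process by blast
next
  fix A :: "real set" assume A: "A \<in> sets borel" "A \<subseteq> {0<..<K}"
  have Y: "(\<lambda>p. first_zero (sawtooth_path lam p) {0..K}) \<in> uniform_square \<rightarrow>\<^sub>M borel"
    using first_zero_sawtooth_path_measurable by (simp add: measurable_cong_sets[OF sets_uniform_square refl])
  have "F = distr uniform_square borel (\<lambda>p. first_zero (sawtooth_path lam p) {0..K})"
    unfolding F_def encoded_square_def
    by (subst distr_distr[OF first_zero_sawtooth_process_measurable encode_pair_measurable])
      (simp add: comp_def sawtooth_process_encode_pair)
  then have "emeasure F (ereal ` A) = emeasure uniform_square {p. first_zero (sawtooth_path lam p) {0..K} \<in> ereal ` A}"
    using Y ereal_image_sets_borel[OF A(1)] by (simp add: emeasure_distr vimage_def)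
  then show "emeasure F (ereal ` A) = (\<integral>\<^sup>+t\<in>A. emeasure lborel {w. 0 \<le> w \<and> t < lam w} \<partial>lborel)"
    using emeasure_first_zero_in[OF A] by simp
qed

end

section \<open>Gap lengths from a nonincreasing density\<close>

definition upper_inverse :: "real \<Rightarrow> (real \<Rightarrow> real) \<Rightarrow> real \<Rightarrow> real" where
  "upper_inverse T f w = Sup (insert 0 {t \<in> {0<..<T}. w < f t})"

lemma bdd_above_upper_inverse_set:
  fixes f :: "real \<Rightarrow> real"
  shows "0 < T \<Longrightarrow> bdd_above (insert 0 {t \<in> {0<..<T}. w < f t})"
  by (rule bdd_aboveI[of _ T]) auto

lemma upper_inverse_bounds:
  assumes "0 < T"
  shows "0 \<le> upper_inverse T f w" "upper_inverse T f w \<le> T"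
  unfolding upper_inverse_def
  by (rule cSup_upper[OF _ bdd_above_upper_inverse_set[OF assms]], simp)
    (rule cSup_least, use assms in auto)

lemma upper_inverse_antimono:
  assumes "0 < T" "w \<le> w'"
  shows "upper_inverse T f w' \<le> upper_inverse T f w"
  unfolding upper_inverse_def
  by (rule cSup_subset_mono[OF _ bdd_above_upper_inverse_set[OF assms(1)]]) (use assms(2) in auto)

lemma upper_inverse_measurable:
  assumes "0 < T"
  shows "upper_inverse T f \<in> borel_measurable borel"
proof -
  have "mono (\<lambda>w. - upper_inverse T f w)"
    using upper_inverse_antimono[OF assms] by (intro monoI) simp
  then have "(\<lambda>w. - (- upper_inverse T f w)) \<in> borel_measurable borel"
    by (intro borel_measurable_uminus borel_measurable_mono)
  then show ?thesis by simp
qed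

lemma less_upper_inverse_iff:
  assumes T: "0 < T" and t: "t \<in> {0<..<T}"
    and f: "nonincr_on f 0 T" "continuous (at_right t) f"
  shows "t < upper_inverse T f w \<longleftrightarrow> w < f t"
proof
  assume "t < upper_inverse T f w"
  then have "\<exists>s\<in>insert 0 {t \<in> {0<..<T}. w < f t}. t < s"
    unfolding upper_inverse_def by (subst (asm) less_cSup_iff[OF _ bdd_above_upper_inverse_set[OF T]]) simp_all
  then obtain s where s: "s \<in> {0<..<T}" "w < f s" "t < s" using t by auto
  from f(1) have "0 < t \<longrightarrow> t \<le> s \<longrightarrow> s < T \<longrightarrow> f s \<le> f t"
    unfolding nonincr_on_def by blast
  then have "f s \<le> f t" using t s by auto
  then show "w < f t" using s(2) by linarith
next
  assume w: "w < f t"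
  have "(f \<longlongrightarrow> f t) (at_right t)" using f(2) by (simp add: continuous_within)
  then have "eventually (\<lambda>s. w < f s) (at_right t)" using w by (rule order_tendstoD(1))
  then obtain b where "t < b" and b: "\<And>s. t < s \<Longrightarrow> s < b \<Longrightarrow> w < f s"
    unfolding eventually_at_right_field by blast
  define s where "s = (t + min b T) / 2"
  have s: "t < s" "s < b" "s < T" using \<open>t < b\<close> t unfolding s_def by auto
  then have "s \<in> insert 0 {t \<in> {0<..<T}. w < f t}" using t b[of s] by auto
  then have "s \<le> upper_inverse T f w"
    unfolding upper_inverse_def by (rule cSup_upper[OF _ bdd_above_upper_inverse_set[OF T]])
  then show "t < upper_inverse T f w" using s by simp
qed

lemma emeasure_less_upper_inverse:
  assumes "0 < T" "t \<in> {0<..<T}" "nonincr_on f 0 T" "continuous (at_right t) f" "0 \<le> f t"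
  shows "emeasure lborel {w. 0 \<le> w \<and> t < upper_inverse T f w} = ennreal (f t)"
proof -
  have "{w. 0 \<le> w \<and> t < upper_inverse T f w} = {0..<f t}"
    unfolding less_upper_inverse_iff[OF assms(1-4)] by auto
  then show ?thesis using assms(5) by simp
qed

text \<open>The number of \<open>j\<close> with \<open>t < \<lambda>(j + v)\<close> is the number of \<open>j\<close> with \<open>j + v < f t\<close>, at most \<open>\<lceil>f t\<rceil>\<close>.\<close>
lemma cumlen_upper_inverse_le_1:
  assumes T: "0 < T" and f: "nonincr_on f 0 T" "\<forall>t\<in>{0<..<T}. continuous (at_right t) f"
    and ceiling: "(\<integral>\<^sup>+t\<in>{0<..<T}. ennreal (of_int \<lceil>f t\<rceil>) \<partial>lborel) \<le> 1"
    and v: "0 \<le> v"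
  shows "cumlen (upper_inverse T f) k v \<le> 1"
proof -
  let ?L = "upper_inverse T f"
  note [measurable] = upper_inverse_measurable[OF T]
  have len: "ennreal (?L w) = (\<integral>\<^sup>+t. indicator {0<..<T} t * of_bool (t < ?L w) \<partial>lborel)" for w
  proof -
    have "(\<integral>\<^sup>+t. indicator {0<..<T} t * of_bool (t < ?L w) \<partial>lborel) = (\<integral>\<^sup>+t. indicator {0<..<?L w} t \<partial>lborel)"
      using upper_inverse_bounds[OF T, of f w] by (intro nn_integral_cong) (auto simp: indicator_def)
    then show ?thesis using upper_inverse_bounds[OF T, of f w] by simp
  qed
  have count: "(\<Sum>j. indicator {0<..<T} t * of_bool (t < ?L (real j + v)) :: ennreal) \<le>
      ennreal (of_int \<lceil>f t\<rceil>) * indicator {0<..<T} t" for t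
  proof (cases "t \<in> {0<..<T}")
    case True
    then have "t < ?L (real j + v) \<longleftrightarrow> real j + v < f t" for j
      using less_upper_inverse_iff[OF T _ f(1)] f(2) by blast
    then show ?thesis using True suminf_of_bool_le_ceiling[OF v, of "f t"] by simp
  qed simp
  have "ennreal (cumlen ?L k v) = (\<Sum>j<k. ennreal (?L (real j + v)))"
    unfolding cumlen_def using upper_inverse_bounds[OF T] by (intro sum_ennreal[symmetric]) auto
  also have "\<dots> \<le> (\<Sum>j. ennreal (?L (real j + v)))"
    by (rule sum_le_suminf) auto
  also have "\<dots> = (\<integral>\<^sup>+t. (\<Sum>j. indicator {0<..<T} t * of_bool (t < ?L (real j + v))) \<partial>lborel)"
    unfolding len by (rule nn_integral_suminf[symmetric]) measurable
  also have "\<dots> \<le> (\<integral>\<^sup>+t\<in>{0<..<T}. ennreal (of_int \<lceil>f t\<rceil>) \<partial>lborel)"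
    by (intro nn_integral_mono count)
  also have "\<dots> \<le> 1" by (rule ceiling)
  finally show ?thesis by (simp add: ennreal_le_1)
qed

theorem nonincr_density_realized_by_first_zero:
  fixes f :: "real \<Rightarrow> real"
  assumes T: "0 < T" and f: "nonincr_on f 0 T" "\<forall>t\<in>{0<..<T}. continuous (at_right t) f \<and> 0 \<le> f t"
    and ceiling: "(\<integral>\<^sup>+t\<in>{0<..<T}. ennreal (of_int \<lceil>f t\<rceil>) \<partial>lborel) \<le> 1"
  obtains F where "F \<in> I_M T"
    "\<And>A. A \<in> sets borel \<Longrightarrow> A \<subseteq> {0<..<T} \<Longrightarrow> emeasure F (ereal ` A) = (\<integral>\<^sup>+t\<in>A. ennreal (f t) \<partial>lborel)"
proof -
  interpret unit_gap_sequence "upper_inverse T f" T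
    using upper_inverse_measurable upper_inverse_bounds cumlen_upper_inverse_le_1 T f ceiling
    by unfold_locales auto
  show ?thesis
  proof (rule that[OF first_zero_sawtooth_process_law(1)])
    fix A :: "real set" assume A: "A \<in> sets borel" "A \<subseteq> {0<..<T}"
    have "(\<integral>\<^sup>+t\<in>A. emeasure lborel {w. 0 \<le> w \<and> t < upper_inverse T f w} \<partial>lborel) = (\<integral>\<^sup>+t\<in>A. ennreal (f t) \<partial>lborel)"
      using A(2) f by (intro nn_integral_cong) (auto simp: indicator_def emeasure_less_upper_inverse[OF T])
    then show "emeasure (distr encoded_square borel (\<lambda>\<omega>. first_zero (sawtooth_process \<omega>) {0..T})) (ereal ` A) =
        (\<integral>\<^sup>+t\<in>A. ennreal (f t) \<partial>lborel)"
      using first_zero_sawtooth_process_law(2)[OF A] by simp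
  qed
qed

section \<open>Comparing densities\<close>

lemma set_nn_integral_Ioo_le_const:
  fixes h :: "real \<Rightarrow> real"
  assumes "t \<le> c" "0 \<le> a" "\<And>x. t < x \<Longrightarrow> x < c \<Longrightarrow> h x \<le> a"
  shows "(\<integral>\<^sup>+x\<in>{t<..<c}. ennreal (h x) \<partial>lborel) \<le> ennreal (a * (c - t))"
proof -
  have "(\<integral>\<^sup>+x\<in>{t<..<c}. ennreal (h x) \<partial>lborel) \<le> (\<integral>\<^sup>+x\<in>{t<..<c}. ennreal a \<partial>lborel)"
  proof (intro nn_integral_mono)
    fix x
    show "ennreal (h x) * indicator {t<..<c} x \<le> ennreal a * indicator {t<..<c} x"
      using assms(3)[of x] by (cases "x \<in> {t<..<c}") (auto intro!: ennreal_leI)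
  qed
  also have "\<dots> = ennreal (a * (c - t))"
    using assms(1,2) by (simp add: nn_integral_cmult_indicator ennreal_mult)
  finally show ?thesis .
qed

lemma const_le_set_nn_integral_Ioo:
  fixes h :: "real \<Rightarrow> real"
  assumes "t \<le> c" "0 \<le> a" "\<And>x. t < x \<Longrightarrow> x < c \<Longrightarrow> a \<le> h x"
  shows "ennreal (a * (c - t)) \<le> (\<integral>\<^sup>+x\<in>{t<..<c}. ennreal (h x) \<partial>lborel)"
proof -
  have "ennreal (a * (c - t)) = (\<integral>\<^sup>+x\<in>{t<..<c}. ennreal a \<partial>lborel)"
    using assms(1,2) by (simp add: nn_integral_cmult_indicator ennreal_mult)
  also have "\<dots> \<le> (\<integral>\<^sup>+x\<in>{t<..<c}. ennreal (h x) \<partial>lborel)"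
  proof (intro nn_integral_mono)
    fix x
    show "ennreal a * indicator {t<..<c} x \<le> ennreal (h x) * indicator {t<..<c} x"
      using assms(3)[of x] by (cases "x \<in> {t<..<c}") (auto intro!: ennreal_leI)
  qed
  finally show ?thesis .
qed

lemma le_at_right_of_nn_integral_le:
  fixes f g :: "real \<Rightarrow> real"
  assumes f: "continuous (at_right t) f" and g: "continuous (at_right t) g" "0 \<le> g t"
    and le: "\<forall>\<^sub>F c in at_right t. (\<integral>\<^sup>+x\<in>{t<..<c}. ennreal (f x) \<partial>lborel) \<le> (\<integral>\<^sup>+x\<in>{t<..<c}. ennreal (g x) \<partial>lborel)"
  shows "f t \<le> g t"
proof (rule ccontr)
  assume "\<not> f t \<le> g t"
  define e where "e = (f t - g t) / 3"
  have e: "0 < e" "f t - e = g t + 2 * e" using \<open>\<not> f t \<le> g t\<close> by (simp_all add: e_def field_simps)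
  have "\<forall>\<^sub>F s in at_right t. f t - e < f s"
    using f e by (intro order_tendstoD(1)) (auto simp: continuous_within)
  moreover have "\<forall>\<^sub>F s in at_right t. g s < g t + e"
    using g e by (intro order_tendstoD(2)) (auto simp: continuous_within)
  ultimately have "\<forall>\<^sub>F s in at_right t. (f t - e < f s \<and> g s < g t + e) \<and>
      (\<integral>\<^sup>+x\<in>{t<..<s}. ennreal (f x) \<partial>lborel) \<le> (\<integral>\<^sup>+x\<in>{t<..<s}. ennreal (g x) \<partial>lborel)"
    using le by eventually_elim auto
  then obtain b where "t < b" and b: "\<And>s. t < s \<Longrightarrow> s < b \<Longrightarrow> (f t - e < f s \<and> g s < g t + e) \<and>
      (\<integral>\<^sup>+x\<in>{t<..<s}. ennreal (f x) \<partial>lborel) \<le> (\<integral>\<^sup>+x\<in>{t<..<s}. ennreal (g x) \<partial>lborel)"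
    unfolding eventually_at_right_field by blast
  define c where "c = (t + b) / 2"
  have c: "t < c" "c < b" using \<open>t < b\<close> by (auto simp: c_def)
  have f_near: "f t - e \<le> f x" and g_near: "g x \<le> g t + e" if "t < x" "x < c" for x
    using b[of x] that c by auto
  have "ennreal ((f t - e) * (c - t)) \<le> (\<integral>\<^sup>+x\<in>{t<..<c}. ennreal (f x) \<partial>lborel)"
    by (rule const_le_set_nn_integral_Ioo[OF _ _ f_near]) (use c e g(2) in auto)
  also have "\<dots> \<le> (\<integral>\<^sup>+x\<in>{t<..<c}. ennreal (g x) \<partial>lborel)" using b c by blast
  also have "\<dots> \<le> ennreal ((g t + e) * (c - t))"
    by (rule set_nn_integral_Ioo_le_const[OF _ _ g_near]) (use c e g(2) in auto)
  finally have "(f t - e) * (c - t) \<le> (g t + e) * (c - t)"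
    using c e g(2) by (subst (asm) ennreal_le_iff) auto
  then show False using c e by (simp add: mult_le_cancel_right_pos)
qed

lemma density_on_le_at:
  assumes F: "density_on F T f" "density_on F T f'" and G: "density_on G T g" "density_on G T g'"
    and le: "\<forall>t\<in>{0<..<T}. f t \<le> g t" and t: "t \<in> {0<..<T}"
    and cont: "continuous (at_right t) f'" "continuous (at_right t) g'"
  shows "f' t \<le> g' t"
proof (rule le_at_right_of_nn_integral_le[OF cont])
  show "0 \<le> g' t" using G(2) t by (simp add: density_on_def)
  have "\<forall>\<^sub>F c in at_right t. c \<in> {t<..<T}" using t by (intro eventually_at_right_real) auto
  then show "\<forall>\<^sub>F c in at_right t. (\<integral>\<^sup>+x\<in>{t<..<c}. ennreal (f' x) \<partial>lborel) \<le> (\<integral>\<^sup>+x\<in>{t<..<c}. ennreal (g' x) \<partial>lborel)"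
  proof eventually_elim
    case (elim c)
    then have A: "{t<..<c} \<in> sets borel" "{t<..<c} \<subseteq> {0<..<T}" using t by auto
    have "(\<integral>\<^sup>+x\<in>{t<..<c}. ennreal (f' x) \<partial>lborel) = (\<integral>\<^sup>+x\<in>{t<..<c}. ennreal (f x) \<partial>lborel)"
      using F A by (simp add: density_on_def)
    also have "\<dots> \<le> (\<integral>\<^sup>+x\<in>{t<..<c}. ennreal (g x) \<partial>lborel)"
    proof (intro nn_integral_mono)
      fix x
      show "ennreal (f x) * indicator {t<..<c} x \<le> ennreal (g x) * indicator {t<..<c} x"
        using le A(2) by (cases "x \<in> {t<..<c}") (auto intro!: ennreal_leI)
    qed
    also have "\<dots> = (\<integral>\<^sup>+x\<in>{t<..<c}. ennreal (g' x) \<partial>lborel)"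
      using G A by (simp add: density_on_def)
    finally show ?case .
  qed
qed

lemma density_on_mass_le_1:
  assumes "prob_space F" "density_on F T f"
  shows "(\<integral>\<^sup>+x\<in>{0<..<T}. ennreal (f x) \<partial>lborel) \<le> 1"
  using assms prob_space.emeasure_le_1[of F "ereal ` {0<..<T}"] by (simp add: density_on_def)

lemma density_on_transfer:
  assumes "density_on F T f" "density_on F T f'"
    and "\<And>A. A \<in> sets borel \<Longrightarrow> A \<subseteq> {0<..<T} \<Longrightarrow> emeasure G (ereal ` A) = (\<integral>\<^sup>+t\<in>A. ennreal (f' t) \<partial>lborel)"
  shows "density_on G T f"
  using assms by (simp add: density_on_def)

lemma ceiling_mass_le_1_of_E_M_dominated:
  assumes f: "density_on F T f" "density_on F T f'" "cadlag_on f' 0 T"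
    and g: "G \<in> E_M T" "density_on G T g" "\<forall>t\<in>{0<..<T}. f t \<le> g t"
  shows "(\<integral>\<^sup>+t\<in>{0<..<T}. ennreal (of_int \<lceil>f' t\<rceil>) \<partial>lborel) \<le> 1"
proof -
  obtain g' where g': "density_on G T g'" "cadlag_on g' 0 T" "\<forall>t\<in>{0<..<T}. g' t \<in> \<int>"
    and "prob_space G"
    using g(1) unfolding E_M_def distr_on_def by blast
  have "real_of_int \<lceil>f' t\<rceil> \<le> g' t" if t: "t \<in> {0<..<T}" for t
  proof -
    obtain m where m: "g' t = of_int m" using g'(3) t Ints_cases by blast
    have "f' t \<le> g' t"
      using density_on_le_at[OF f(1,2) g(2) g'(1) g(3) t] f(3) g'(2) t by (simp add: cadlag_on_def)
    then show ?thesis unfolding m by (simp add: ceiling_le_iff)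
  qed
  then have "(\<integral>\<^sup>+t\<in>{0<..<T}. ennreal (of_int \<lceil>f' t\<rceil>) \<partial>lborel) \<le> (\<integral>\<^sup>+t\<in>{0<..<T}. ennreal (g' t) \<partial>lborel)"
    by (intro nn_integral_mono) (auto simp: indicator_def intro: ennreal_leI)
  also have "\<dots> \<le> 1" by (rule density_on_mass_le_1[OF \<open>prob_space G\<close> g'(1)])
  finally show ?thesis .
qed

theorem mainTheorem14:
  fixes T :: real and f :: "real \<Rightarrow> real"
  assumes "0 < T" and "T \<le> 1"
    and "in_d f T (A_M T)"
    and "\<exists>g. step_fun_on g 0 T \<and> in_d g T (E_M T) \<and> (\<forall>t\<in>{0<..<T}. f t \<le> g t)"
  shows "in_d f T (I_M T)"
proof -
  obtain FA where "FA \<in> A_M T" and f: "density_on FA T f"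
    using assms(3) unfolding in_d_def by blast
  then obtain fa where fa: "density_on FA T fa" "cadlag_on fa 0 T" "nonincr_on fa 0 T"
    unfolding A_M_def by blast
  obtain g FE where "FE \<in> E_M T" "density_on FE T g" "\<forall>t\<in>{0<..<T}. f t \<le> g t"
    using assms(4) unfolding in_d_def by blast
  then have "(\<integral>\<^sup>+t\<in>{0<..<T}. ennreal (of_int \<lceil>fa t\<rceil>) \<partial>lborel) \<le> 1"
    using ceiling_mass_le_1_of_E_M_dominated[OF f fa(1,2)] by blast
  moreover have "\<forall>t\<in>{0<..<T}. continuous (at_right t) fa \<and> 0 \<le> fa t"
    using fa(1,2) by (simp add: cadlag_on_def density_on_def)
  ultimately obtain F where "F \<in> I_M T" and "\<And>A. A \<in> sets borel \<Longrightarrow> A \<subseteq> {0<..<T} \<Longrightarrow>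
      emeasure F (ereal ` A) = (\<integral>\<^sup>+t\<in>A. ennreal (fa t) \<partial>lborel)"
    using nonincr_density_realized_by_first_zero[OF \<open>0 < T\<close> fa(3)] by blast
  then show ?thesis
    using density_on_transfer[OF f fa(1)] unfolding in_d_def by blast
qed

end
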